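(* The orthogonal projection $P_{V^\perp}$ of $\mathcal H$ onto $V^\perp$ is harmonic for the quantum Markov semigroup $(\mathcal T_t^* )_{t\ge0}$, i.e. $\mathcal L^*(P_{V^\perp})=0$; consequently the orthogonal projection $P_V$ onto $V$ is also harmonic.
   Context: Fix integers $N\ge 2$ and $n_1\ge n_2\ge\dots\ge n_N\ge 1$. Let $\mathcal H$ be a finite-dimensional complex Hilbert space with orthonormal basis $\{|-\rangle,|+\rangle\}\cup\{|a_k\rangle:1\le k\le N,\ 0\le a\le n_k-1\}$. For vectors $x,y$, $|x\rangle\langle y|$ denotes the operator $u\mapsto\langle y,u\rangle x$. Put $E_k=\mathrm{span}\{|a_k\rangle:0\le a\le n_k-1\}$, $P_k$ the orthogonal projection onto $E_k$, $P_\pm=|\pm\rangle\langle\pm|$, $\zeta_k=e^{2\pi i/n_k}$, and $\varphi_{a_k}=n_k^{-1/2}\sum_{b=0}^{n_k-1}\zeta_k^{-ba}|b_k\rangle$ for $0\le a\le n_k-1$. For $1\le k\le N-1$ let $Z_k=n_k^{-1/2}\sum_{b=0}^{n_{k+1}-1}\sum_{a=0}^{n_k-1}\zeta_k^{ba}|b_{k+1}\rangle\langle a_k|$ (an operator on $\mathcal H$), $|Z|_k=Z_k^*Z_k$. The transport operator is $Z=\sum_{k=1}^{N-1}Z_k$. Let $\omega$ range over the set $\{\omega_+,\omega_-,\omega_1,\dots,\omega_{N-1}\}$ of (distinct) Bohr frequencies, and let $\Gamma_{\pm,\omega}>0$, $\gamma_{\pm,\omega}\in\mathbb R$ be constants.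 Kraus operators: $L_{-,\omega_+}=\sqrt{n_1\Gamma_{-,\omega_+}}|\varphi_{0_1}\rangle\langle +|$, $L_{+,\omega_+}=\sqrt{n_1\Gamma_{+,\omega_+}}|+\rangle\langle\varphi_{0_1}|$, $L_{-,\omega_k}=\sqrt{\Gamma_{-,\omega_k}}Z_k$, $L_{+,\omega_k}=\sqrt{\Gamma_{+,\omega_k}}Z_k^*$ ($1\le k\le N-1$), $L_{-,\omega_-}=\sqrt{\Gamma_{-,\omega_-}}|-\rangle\langle\varphi_{0_N}|$, $L_{+,\omega_-}=0$. Effective Hamiltonian $H_{\mathrm{eff}}=n_1\gamma_{-,\omega_+}P_+-n_1\gamma_{+,\omega_+}|\varphi_{0_1}\rangle\langle\varphi_{0_1}|+\gamma_{-,\omega_-}|\varphi_{0_N}\rangle\langle\varphi_{0_N}|-\gamma_{+,\omega_-}P_-+\sum_{k=1}^{N-1}(\gamma_{-,\omega_k}|Z|_k-\gamma_{+,\omega_k}P_{k+1})$. The dual generator on $B(\mathcal H)$ is $\mathcal L^*(x)=i[H_{\mathrm{eff}},x]+\sum_{\omega}\sum_{\epsilon=\pm}\big(L_{\epsilon,\omega}^*xL_{\epsilon,\omega}-\tfrac12\{L_{\epsilon,\omega}^*L_{\epsilon,\omega},x\}\big)$ and $\mathcal T_t^*=e^{t\mathcal L^*}$. A selfadjoint $p$ is harmonic if $\mathcal T_t^*(p)=p$ for all $t\ge0$ (equivalently $\mathcal L^*(p)=0$). $V$ is the orthogonal complement of the set $\{|-\rangle,|+\rangle,Z^n\varphi_{0_1},Z^{*n}\varphi_{0_N},Z^{*s}\varphi_{0_{2m+1}}:0\le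 n\le N-1,\ 1\le m\le (N-1)/2,\ 1\le s\le 2m\}$. *)

theory Defs
  imports Complex_Main "HOL-Library.Function_Algebras"
begin

(* Basis labels of H:  |->,  |+>,  and  Ket k a = |a_k>  (1 <= k <= N, 0 <= a < n k). *)
datatype lab = KMinus | KPlus | Ket nat nat

datatype sgn = SMinus | SPlus

(* Bohr frequencies: omega_+, omega_-, omega_k (1 <= k <= N-1) *)
datatype freq = WPlus | WMinus | WLev nat

(* vectors and operators are represented in the orthonormal basis {|l> : l in labels N n} *)
type_synonym qvec = "lab \<Rightarrow> complex"
type_synonym qop = "lab \<Rightarrow> lab \<Rightarrow> complex"

definition labels :: "nat \<Rightarrow> (nat \<Rightarrow> nat) \<Rightarrow> lab set" where
  "labels N n = {KMinus, KPlus} \<union> {Ket k a | k a. 1 \<le> k \<and> k \<le> N \<and> a < n k}"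

definition vecs :: "lab set \<Rightarrow> qvec set" where
  "vecs I = {v. \<forall>i. i \<notin> I \<longrightarrow> v i = 0}"

definition ket :: "lab \<Rightarrow> qvec" where
  "ket l = (\<lambda>i. if i = l then 1 else 0)"

definition inner :: "lab set \<Rightarrow> qvec \<Rightarrow> qvec \<Rightarrow> complex" where
  "inner I x y = (\<Sum>i\<in>I. cnj (x i) * y i)"

definition outer :: "qvec \<Rightarrow> qvec \<Rightarrow> qop" where
  "outer x y = (\<lambda>i j. x i * cnj (y j))"

definition opmult :: "lab set \<Rightarrow> qop \<Rightarrow> qop \<Rightarrow> qop" where
  "opmult I A B = (\<lambda>i j. \<Sum>l\<in>I. A i l * B l j)"

definition opapp :: "lab set \<Rightarrow> qop \<Rightarrow> qvec \<Rightarrow> qvec" where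
  "opapp I A x = (\<lambda>i. \<Sum>j\<in>I. A i j * x j)"

definition adj :: "qop \<Rightarrow> qop" where
  "adj A = (\<lambda>i j. cnj (A j i))"

definition scl :: "complex \<Rightarrow> qop \<Rightarrow> qop" where
  "scl c A = (\<lambda>i j. c * A i j)"

fun oppow :: "lab set \<Rightarrow> qop \<Rightarrow> nat \<Rightarrow> qop" where
  "oppow I A 0 = (\<lambda>i j. if i \<in> I \<and> i = j then 1 else 0)"
| "oppow I A (Suc m) = opmult I A (oppow I A m)"

definition zeta :: "(nat \<Rightarrow> nat) \<Rightarrow> nat \<Rightarrow> complex" where
  "zeta n k = cis (2 * pi / real (n k))"

definition phi :: "(nat \<Rightarrow> nat) \<Rightarrow> nat \<Rightarrow> nat \<Rightarrow> qvec" where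
  "phi n k a = (\<lambda>i. case i of
       Ket k' b \<Rightarrow> if k' = k \<and> b < n k
                   then inverse (zeta n k) ^ (b * a) / complex_of_real (sqrt (real (n k)))
                   else 0
     | _ \<Rightarrow> 0)"

definition Zop :: "(nat \<Rightarrow> nat) \<Rightarrow> nat \<Rightarrow> qop" where
  "Zop n k = (\<lambda>i j. case (i, j) of
       (Ket k1 b, Ket k2 a) \<Rightarrow>
          if k1 = Suc k \<and> k2 = k \<and> b < n (Suc k) \<and> a < n k
          then zeta n k ^ (b * a) / complex_of_real (sqrt (real (n k)))
          else 0
     | _ \<Rightarrow> 0)"

definition Ztot :: "nat \<Rightarrow> (nat \<Rightarrow> nat) \<Rightarrow> qop" where
  "Ztot N n = (\<Sum>k\<in>{1..N-1}. Zop n k)"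

definition absZ :: "lab set \<Rightarrow> (nat \<Rightarrow> nat) \<Rightarrow> nat \<Rightarrow> qop" where
  "absZ I n k = opmult I (adj (Zop n k)) (Zop n k)"

definition Pk :: "(nat \<Rightarrow> nat) \<Rightarrow> nat \<Rightarrow> qop" where
  "Pk n k = (\<lambda>i j. if i = j \<and> (\<exists>a. a < n k \<and> i = Ket k a) then 1 else 0)"

definition freqs :: "nat \<Rightarrow> freq set" where
  "freqs N = {WPlus, WMinus} \<union> WLev ` {1..N-1}"

(* Effective Hamiltonian; gm w = gamma_{-,w}, gp w = gamma_{+,w} *)
definition Heff :: "nat \<Rightarrow> (nat \<Rightarrow> nat) \<Rightarrow> (freq \<Rightarrow> real) \<Rightarrow> (freq \<Rightarrow> real) \<Rightarrow> qop" where
  "Heff N n gm gp =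
     scl (of_real (real (n 1) * gm WPlus)) (outer (ket KPlus) (ket KPlus))
   - scl (of_real (real (n 1) * gp WPlus)) (outer (phi n 1 0) (phi n 1 0))
   + scl (of_real (gm WMinus)) (outer (phi n N 0) (phi n N 0))
   - scl (of_real (gp WMinus)) (outer (ket KMinus) (ket KMinus))
   + (\<Sum>k\<in>{1..N-1}. scl (of_real (gm (WLev k))) (absZ (labels N n) n k)
                     - scl (of_real (gp (WLev k))) (Pk n (Suc k)))"

(* Kraus operators L_{eps,w}; Gm w = Gamma_{-,w}, Gp w = Gamma_{+,w} *)
definition kraus :: "nat \<Rightarrow> (nat \<Rightarrow> nat) \<Rightarrow> (freq \<Rightarrow> real) \<Rightarrow> (freq \<Rightarrow> real)
                      \<Rightarrow> sgn \<Rightarrow> freq \<Rightarrow> qop" where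
  "kraus N n Gm Gp e w = (case (e, w) of
       (SMinus, WPlus) \<Rightarrow> scl (of_real (sqrt (real (n 1) * Gm WPlus))) (outer (phi n 1 0) (ket KPlus))
     | (SPlus, WPlus) \<Rightarrow> scl (of_real (sqrt (real (n 1) * Gp WPlus))) (outer (ket KPlus) (phi n 1 0))
     | (SMinus, WLev k) \<Rightarrow> scl (of_real (sqrt (Gm (WLev k)))) (Zop n k)
     | (SPlus, WLev k) \<Rightarrow> scl (of_real (sqrt (Gp (WLev k)))) (adj (Zop n k))
     | (SMinus, WMinus) \<Rightarrow> scl (of_real (sqrt (Gm WMinus))) (outer (ket KMinus) (phi n N 0))
     | (SPlus, WMinus) \<Rightarrow> 0)"

definition Lstar :: "nat \<Rightarrow> (nat \<Rightarrow> nat) \<Rightarrow> (freq \<Rightarrow> real) \<Rightarrow> (freq \<Rightarrow> real)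
                      \<Rightarrow> (freq \<Rightarrow> real) \<Rightarrow> (freq \<Rightarrow> real) \<Rightarrow> qop \<Rightarrow> qop" where
  "Lstar N n Gm Gp gm gp x =
     (let I = labels N n; H = Heff N n gm gp in
      scl \<i> (opmult I H x - opmult I x H)
      + (\<Sum>w\<in>freqs N. \<Sum>e\<in>{SMinus, SPlus}.
           (let L = kraus N n Gm Gp e w; LL = opmult I (adj L) L in
              opmult I (opmult I (adj L) x) L - scl (1/2) (opmult I LL x + opmult I x LL))))"

definition harmonic :: "nat \<Rightarrow> (nat \<Rightarrow> nat) \<Rightarrow> (freq \<Rightarrow> real) \<Rightarrow> (freq \<Rightarrow> real)
                      \<Rightarrow> (freq \<Rightarrow> real) \<Rightarrow> (freq \<Rightarrow> real) \<Rightarrow> qop \<Rightarrow> bool" where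
  "harmonic N n Gm Gp gm gp p \<longleftrightarrow>
     (\<forall>i\<in>labels N n. \<forall>j\<in>labels N n. adj p i j = p i j) \<and>
     (\<forall>i\<in>labels N n. \<forall>j\<in>labels N n. Lstar N n Gm Gp gm gp p i j = 0)"

definition orthc :: "lab set \<Rightarrow> qvec set \<Rightarrow> qvec set" where
  "orthc I S = {v \<in> vecs I. \<forall>s\<in>S. inner I s v = 0}"

definition gens :: "nat \<Rightarrow> (nat \<Rightarrow> nat) \<Rightarrow> qvec set" where
  "gens N n = (let I = labels N n; Z = Ztot N n in
     {ket KMinus, ket KPlus}
     \<union> {opapp I (oppow I Z m) (phi n 1 0) | m. m \<le> N - 1}
     \<union> {opapp I (oppow I (adj Z) m) (phi n N 0) | m. m \<le> N - 1}
     \<union> {opapp I (oppow I (adj Z) s) (phi n (2 * m + 1) 0) | m s.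
            1 \<le> m \<and> 2 * m \<le> N - 1 \<and> 1 \<le> s \<and> s \<le> 2 * m})"

definition Vsp :: "nat \<Rightarrow> (nat \<Rightarrow> nat) \<Rightarrow> qvec set" where
  "Vsp N n = orthc (labels N n) (gens N n)"

definition orth_proj :: "lab set \<Rightarrow> qvec set \<Rightarrow> qop \<Rightarrow> bool" where
  "orth_proj I W p \<longleftrightarrow>
     (\<forall>i j. i \<notin> I \<or> j \<notin> I \<longrightarrow> p i j = 0) \<and>
     (\<forall>v\<in>vecs I. opapp I p v \<in> W \<and> (\<forall>w\<in>W. inner I w (v - opapp I p v) = 0))"

end

theory Submission
  imports Defs "HOL-Library.Real_Mod"
begin

text \<open>
  \<open>V\<close> is the orthogonal complement of a set of generators, each of which is \<open>|\<plusminus>\<rangle>\<close> or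
  lies in a single level \<open>E\<^sub>k\<close>, and \<open>Z\<close> and \<open>Z\<^sup>*\<close> map every generator to a vector
  orthogonal to \<open>V\<close>: the vectors \<open>Z\<^sup>m \<phi>(0\<^sub>1)\<close> alternate between positive multiples
  of \<open>\<phi>(0\<^sub>k)\<close> and \<open>|0\<^sub>k\<rangle>\<close> (\<open>k = m + 1\<close>), and the backward chains
  \<open>Z\<^sup>*\<^sup>s \<phi>(0\<^sub>k)\<close> are undone by \<open>Z\<close> because \<open>Z Z\<^sup>*\<close> is the identity on
  \<open>E\<^sub>2 \<oplus> \<dots> \<oplus> E\<^sub>N\<close>. Since \<open>Z\<^sub>k\<close>, \<open>Z\<^sub>k\<^sup>*\<close> and \<open>P\<^sub>k\<close> act on each level
  as \<open>Z\<close>, \<open>Z\<^sup>*\<close>, the identity or \<open>0\<close>, and the rank-one terms of the Hamiltonian and of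
  the Kraus operators are built from generators, both \<open>V\<close> and \<open>V\<^sup>\<bottom>\<close> reduce every
  operator occurring in \<open>Lstar\<close>. The orthogonal projection onto a reducing subspace
  commutes with the operator, and a selfadjoint \<open>p\<close> commuting with the Hamiltonian and every
  Kraus operator is annihilated by \<open>Lstar\<close>.
\<close>

section \<open>Matrices over a finite index set\<close>

lemma sum_fun_apply: "sum f S x = (\<Sum>s\<in>S. f s x)"
  by (induct S rule: infinite_finite_induct) auto

lemma sum_fun_apply2: "sum f S x y = (\<Sum>s\<in>S. f s x y)"
  by (simp add: sum_fun_apply)

lemma opmult_assoc: "opmult I (opmult I A B) C = opmult I A (opmult I B C)"
  unfolding opmult_def
  by (intro ext) (simp add: sum_distrib_left sum_distrib_right mult.assoc, rule sum.swap)

lemma opapp_opmult: "opapp I (opmult I A B) x = opapp I A (opapp I B x)"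
  unfolding opapp_def opmult_def
  by (intro ext) (simp add: sum_distrib_left sum_distrib_right mult.assoc, rule sum.swap)

lemma opmult_add:
  "opmult I A (B + C) = opmult I A B + opmult I A C"
  "opmult I (B + C) A = opmult I B A + opmult I C A"
  unfolding opmult_def by (auto simp: fun_eq_iff distrib_left distrib_right sum.distrib)

lemma opmult_diff:
  "opmult I A (B - C) = opmult I A B - opmult I A C"
  "opmult I (B - C) A = opmult I B A - opmult I C A"
  unfolding opmult_def by (auto simp: fun_eq_iff right_diff_distrib left_diff_distrib sum_subtractf)

lemma opmult_scl:
  "opmult I A (scl c B) = scl c (opmult I A B)"
  "opmult I (scl c B) A = scl c (opmult I B A)"
  unfolding opmult_def scl_def by (auto simp: fun_eq_iff sum_distrib_left mult_ac)

lemma opapp_diff: "opapp I A (x - y) = opapp I A x - opapp I A y"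
  unfolding opapp_def by (rule ext) (simp add: algebra_simps sum_subtractf)

lemma opapp_scale: "opapp I A (\<lambda>i. c * x i) = (\<lambda>i. c * opapp I A x i)"
  unfolding opapp_def by (rule ext) (simp add: sum_distrib_left mult_ac)

lemma opapp_ket: "finite I \<Longrightarrow> j \<in> I \<Longrightarrow> opapp I A (ket j) = (\<lambda>i. A i j)"
  unfolding opapp_def ket_def by (rule ext) (simp add: if_distrib sum.delta cong: if_cong)

lemma opapp_outer: "opapp I (outer x y) v = (\<lambda>i. inner I y v * x i)"
  unfolding opapp_def outer_def inner_def by (rule ext) (simp add: sum_distrib_left mult_ac)

lemma adj_adj [simp]: "adj (adj A) = A"
  unfolding adj_def by simp

lemma adj_outer: "adj (outer x y) = outer y x"
  unfolding adj_def outer_def by (intro ext) simp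

lemma inner_opapp_adj: "inner I x (opapp I A y) = inner I (opapp I (adj A) x) y"
  unfolding inner_def opapp_def adj_def
  by (simp add: sum_distrib_left sum_distrib_right mult_ac, rule sum.swap)

lemma inner_diff_right: "inner I x (y - z) = inner I x y - inner I x z"
  unfolding inner_def by (simp add: algebra_simps sum_subtractf)

lemma inner_scale_left: "inner I (\<lambda>i. c * x i) y = cnj c * inner I x y"
  unfolding inner_def by (simp add: sum_distrib_left mult_ac)

lemma inner_self_eq_0D:
  assumes "finite I" "inner I d d = 0" "i \<in> I"
  shows "d i = 0"
proof -
  have "complex_of_real (\<Sum>l\<in>I. (cmod (d l))\<^sup>2) = inner I d d"
    unfolding inner_def of_real_sum
    by (intro sum.cong refl) (metis complex_mult_cnj complex_norm_square mult.commute)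
  with assms(2) have "(\<Sum>l\<in>I. (cmod (d l))\<^sup>2) = 0"
    by (simp only: of_real_eq_0_iff)
  with assms(1,3) show ?thesis
    by (subst (asm) sum_nonneg_eq_0_iff) auto
qed

lemma opapp_identity:
  assumes "finite I" "x \<in> vecs I"
  shows "opapp I (\<lambda>i j. if i \<in> I \<and> i = j then 1 else 0) x = x"
proof (rule ext)
  fix i
  have "opapp I (\<lambda>i j. if i \<in> I \<and> i = j then 1 else 0) x i
      = (\<Sum>j\<in>I. if j = i then (if i \<in> I then x i else 0) else 0)"
    unfolding opapp_def by (rule sum.cong) auto
  also have "\<dots> = x i"
    using assms by (simp add: vecs_def)
  finally show "opapp I (\<lambda>i j. if i \<in> I \<and> i = j then 1 else 0) x i = x i" .
qed

lemma ket_in_vecs: "j \<in> I \<Longrightarrow> ket j \<in> vecs I"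
  unfolding ket_def vecs_def by auto

definition on_space :: "lab set \<Rightarrow> qop \<Rightarrow> bool" where
  "on_space I B \<longleftrightarrow> (\<forall>i j. i \<notin> I \<or> j \<notin> I \<longrightarrow> B i j = 0)"

lemma on_space_adj: "on_space I B \<Longrightarrow> on_space I (adj B)"
  unfolding on_space_def adj_def by auto

lemma on_space_opapp: "on_space I B \<Longrightarrow> opapp I B v \<in> vecs I"
  unfolding on_space_def vecs_def opapp_def by auto

definition reducing :: "lab set \<Rightarrow> qvec set \<Rightarrow> qop \<Rightarrow> bool" where
  "reducing I X B \<longleftrightarrow> (\<forall>x\<in>X. opapp I B x \<in> X \<and> opapp I (adj B) x \<in> X)"

lemma orthc_diff: "x \<in> orthc I S \<Longrightarrow> y \<in> orthc I S \<Longrightarrow> x - y \<in> orthc I S"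
  unfolding orthc_def vecs_def by (auto simp: inner_diff_right)

lemma reducing_orthc:
  assumes "on_space I B"
    and "\<And>s v. s \<in> S \<Longrightarrow> v \<in> orthc I S \<Longrightarrow>
           inner I (opapp I B s) v = 0 \<and> inner I (opapp I (adj B) s) v = 0"
  shows "reducing I (orthc I S) B"
  unfolding reducing_def orthc_def
  using assms on_space_opapp[OF on_space_adj] on_space_opapp
  by (auto simp: inner_opapp_adj[of I _ B] inner_opapp_adj[of I _ "adj B"] orthc_def)

lemma reducing_orthc_orthc:
  assumes "on_space I B" "reducing I X B"
  shows "reducing I (orthc I X) B"
  using assms unfolding reducing_def
  by (intro reducing_orthc[unfolded reducing_def]) (auto simp: orthc_def)

lemma orth_proj_selfadjoint:
  assumes fin: "finite I" and p: "orth_proj I X p" and ij: "i \<in> I" "j \<in> I"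
  shows "adj p i j = p i j"
proof -
  define M where "M a b = inner I (opapp I p (ket a)) (opapp I p (ket b))" for a b
  have entry: "cnj (p b a) = M a b" if "a \<in> I" "b \<in> I" for a b
  proof -
    have "opapp I p (ket a) \<in> X"
      using p ket_in_vecs[OF that(1)] unfolding orth_proj_def by blast
    then have "inner I (opapp I p (ket a)) (ket b - opapp I p (ket b)) = 0"
      using p ket_in_vecs[OF that(2)] unfolding orth_proj_def by blast
    moreover have "inner I (opapp I p (ket a)) (ket b) = cnj (p b a)"
      using fin that unfolding opapp_ket[OF fin that(1)] unfolding inner_def ket_def
      by (simp add: if_distrib sum.delta cong: if_cong)
    ultimately show ?thesis
      unfolding M_def by (simp add: inner_diff_right)
  qed
  have "M b a = cnj (M a b)" for a b
    unfolding M_def inner_def by (simp add: mult.commute)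
  then show ?thesis
    unfolding adj_def using entry[OF ij] entry[OF ij(2,1)] by (metis complex_cnj_cnj)
qed

text \<open>If \<open>X\<close> reduces \<open>B\<close>, then both \<open>p B e\<^sub>j\<close> and \<open>B p e\<^sub>j\<close> lie in \<open>X\<close> and
  differ from \<open>B e\<^sub>j\<close> by a vector orthogonal to \<open>X\<close>, so they coincide.\<close>

lemma orth_proj_commute:
  assumes fin: "finite I" and p: "orth_proj I X p"
    and diff: "\<And>x y. x \<in> X \<Longrightarrow> y \<in> X \<Longrightarrow> x - y \<in> X"
    and B: "on_space I B" "reducing I X B"
    and ij: "i \<in> I" "j \<in> I"
  shows "opmult I p B i j = opmult I B p i j"
proof -
  let ?v = "ket j"
  let ?u = "opapp I B ?v"
  let ?w1 = "opapp I p ?u" and ?w2 = "opapp I B (opapp I p ?v)"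
  have v: "?v \<in> vecs I" by (rule ket_in_vecs[OF ij(2)])
  have u: "?u \<in> vecs I" by (rule on_space_opapp[OF B(1)])
  have w1: "?w1 \<in> X" using p u unfolding orth_proj_def by blast
  have w2: "?w2 \<in> X" using p v B(2) unfolding orth_proj_def reducing_def by blast
  have perp1: "inner I x (?u - ?w1) = 0" if "x \<in> X" for x
    using p u that unfolding orth_proj_def by blast
  have perp2: "inner I x (?u - ?w2) = 0" if "x \<in> X" for x
  proof -
    have "inner I x (?u - ?w2) = inner I (opapp I (adj B) x) (?v - opapp I p ?v)"
      by (simp only: inner_opapp_adj[symmetric] opapp_diff)
    also have "\<dots> = 0" using p v B(2) that unfolding orth_proj_def reducing_def by blast
    finally show ?thesis .
  qed
  let ?d = "?w2 - ?w1"
  have "?d = (?u - ?w1) - (?u - ?w2)" by simp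
  then have "inner I ?d ?d = 0"
    using perp1 perp2 diff[OF w2 w1] by (simp add: inner_diff_right)
  then have "?d i = 0"
    by (rule inner_self_eq_0D[OF fin _ ij(1)])
  then have "?w1 i = ?w2 i"
    by simp
  then show ?thesis
    unfolding opapp_ket[OF fin ij(2)] by (simp add: opapp_def opmult_def)
qed

section \<open>The commutant of a selfadjoint operator\<close>

definition commutes :: "lab set \<Rightarrow> qop \<Rightarrow> qop \<Rightarrow> bool" where
  "commutes I p A \<longleftrightarrow> (\<forall>i\<in>I. \<forall>j\<in>I. opmult I p A i j = opmult I A p i j)"

lemma commutes_zero: "commutes I p 0"
  unfolding commutes_def opmult_def by simp

lemma commutes_add: "commutes I p A \<Longrightarrow> commutes I p B \<Longrightarrow> commutes I p (A + B)"
  unfolding commutes_def opmult_add by simp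

lemma commutes_diff: "commutes I p A \<Longrightarrow> commutes I p B \<Longrightarrow> commutes I p (A - B)"
  unfolding commutes_def opmult_diff by simp

lemma commutes_scl: "commutes I p A \<Longrightarrow> commutes I p (scl c A)"
  unfolding commutes_def opmult_scl by (simp add: scl_def)

lemma commutes_sum: "(\<And>s. s \<in> S \<Longrightarrow> commutes I p (f s)) \<Longrightarrow> commutes I p (sum f S)"
proof (induction S rule: infinite_finite_induct)
  case (insert x F)
  show ?case
    unfolding sum.insert[OF insert.hyps] by (intro commutes_add insert) auto
qed (simp_all add: commutes_def opmult_def)

lemma opmult_commutes_left:
  "commutes I p A \<Longrightarrow> i \<in> I \<Longrightarrow> j \<in> I \<Longrightarrow>
    opmult I (opmult I p A) B i j = opmult I (opmult I A p) B i j"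
  unfolding opmult_def[of I _ B] commutes_def by (intro sum.cong) auto

lemma opmult_commutes_right:
  "commutes I p B \<Longrightarrow> i \<in> I \<Longrightarrow> j \<in> I \<Longrightarrow>
    opmult I A (opmult I p B) i j = opmult I A (opmult I B p) i j"
  unfolding opmult_def[of I A] commutes_def by (intro sum.cong) auto

lemma commutes_mult:
  assumes "commutes I p A" "commutes I p B"
  shows "commutes I p (opmult I A B)"
  unfolding commutes_def
proof (intro ballI)
  fix i j assume ij: "i \<in> I" "j \<in> I"
  have "opmult I p (opmult I A B) i j = opmult I (opmult I A p) B i j"
    using opmult_commutes_left[OF assms(1) ij] by (simp add: opmult_assoc)
  also have "\<dots> = opmult I A (opmult I B p) i j"
    using opmult_commutes_right[OF assms(2) ij] by (simp add: opmult_assoc)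
  finally show "opmult I p (opmult I A B) i j = opmult I (opmult I A B) p i j"
    by (simp add: opmult_assoc)
qed

lemma commutes_adj:
  assumes p: "\<forall>i\<in>I. \<forall>j\<in>I. adj p i j = p i j" and A: "commutes I p A"
  shows "commutes I p (adj A)"
  unfolding commutes_def
proof (intro ballI)
  fix i j assume ij: "i \<in> I" "j \<in> I"
  have p_cnj: "cnj (p a b) = p b a" if "a \<in> I" "b \<in> I" for a b
    using p that unfolding adj_def by auto
  have "opmult I (adj A) p i j = cnj (\<Sum>l\<in>I. cnj (p l j) * A l i)"
    unfolding opmult_def adj_def by (simp add: mult.commute)
  also have "\<dots> = cnj (\<Sum>l\<in>I. p j l * A l i)"
    using p_cnj ij by (intro arg_cong[where f = cnj] sum.cong) auto
  also have "(\<Sum>l\<in>I. p j l * A l i) = (\<Sum>l\<in>I. A j l * p l i)"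
    using A ij unfolding commutes_def opmult_def by auto
  also have "cnj \<dots> = (\<Sum>l\<in>I. p i l * cnj (A j l))"
    using p_cnj ij by (simp, intro sum.cong) (auto simp: mult.commute)
  also have "\<dots> = opmult I p (adj A) i j"
    unfolding opmult_def adj_def ..
  finally show "opmult I p (adj A) i j = opmult I (adj A) p i j" by simp
qed

text \<open>Since \<open>p\<close> also commutes with \<open>L\<^sup>*\<close>, all three terms equal \<open>p L\<^sup>*L\<close>.\<close>

lemma dissipator_eq_0:
  assumes p: "\<forall>i\<in>I. \<forall>j\<in>I. adj p i j = p i j" and L: "commutes I p L"
    and ij: "i \<in> I" "j \<in> I"
  shows "(opmult I (opmult I (adj L) p) L
           - scl (1/2) (opmult I (opmult I (adj L) L) p + opmult I p (opmult I (adj L) L))) i j = 0"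
proof -
  define LL where "LL = opmult I (adj L) L"
  have L': "commutes I p (adj L)" by (rule commutes_adj[OF p L])
  have "opmult I (opmult I (adj L) p) L i j = opmult I p LL i j"
    using opmult_commutes_left[OF L' ij] unfolding LL_def by (simp add: opmult_assoc)
  moreover have "opmult I LL p i j = opmult I p LL i j"
    using commutes_mult[OF L' L] ij unfolding LL_def commutes_def by simp
  ultimately show ?thesis
    unfolding LL_def[symmetric] by (simp add: scl_def)
qed

lemma Lstar_eq_0:
  assumes p: "\<forall>i\<in>labels N n. \<forall>j\<in>labels N n. adj p i j = p i j"
    and H: "commutes (labels N n) p (Heff N n gm gp)"
    and L: "\<And>w e. w \<in> freqs N \<Longrightarrow> commutes (labels N n) p (kraus N n Gm Gp e w)"
    and ij: "i \<in> labels N n" "j \<in> labels N n"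
  shows "Lstar N n Gm Gp gm gp p i j = 0"
proof -
  let ?I = "labels N n" and ?H = "Heff N n gm gp"
  define D where "D L = opmult ?I (opmult ?I (adj L) p) L
    - scl (1/2) (opmult ?I (opmult ?I (adj L) L) p + opmult ?I p (opmult ?I (adj L) L))" for L
  have "Lstar N n Gm Gp gm gp p =
      scl \<i> (opmult ?I ?H p - opmult ?I p ?H)
      + (\<Sum>w\<in>freqs N. \<Sum>e\<in>{SMinus, SPlus}. D (kraus N n Gm Gp e w))"
    unfolding Lstar_def D_def Let_def ..
  moreover have "D (kraus N n Gm Gp e w) i j = 0" if "w \<in> freqs N" for e w
    unfolding D_def by (rule dissipator_eq_0[OF p L[OF that] ij])
  ultimately show ?thesis
    using H ij by (simp add: sum_fun_apply2 scl_def commutes_def)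
qed

lemma sum_cis_power_orthogonal:
  fixes m b b' :: nat
  defines "\<zeta> \<equiv> cis (2 * pi / real m)"
  assumes "b < m" "b' < m"
  shows "(\<Sum>a<m. \<zeta> ^ (b * a) * cnj (\<zeta> ^ (b' * a))) = (if b = b' then of_nat m else 0)"
proof -
  define d where "d = real b - real b'"
  define w where "w = cis (2 * pi * d / real m)"
  have m: "real m > 0" using assms(2) by simp
  have summand: "\<zeta> ^ (b * a) * cnj (\<zeta> ^ (b' * a)) = w ^ a" for a
  proof -
    have "\<zeta> ^ (b * a) * cnj (\<zeta> ^ (b' * a))
        = cis (2 * pi * real (b * a) / real m) * cis (- (2 * pi * real (b' * a) / real m))"
      by (simp add: \<zeta>_def DeMoivre cis_cnj field_simps)
    also have "\<dots> = w ^ a"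
      by (simp add: cis_mult w_def d_def DeMoivre field_simps diff_divide_distrib)
    finally show ?thesis .
  qed
  then have "(\<Sum>a<m. \<zeta> ^ (b * a) * cnj (\<zeta> ^ (b' * a))) = (\<Sum>a<m. w ^ a)"
    by simp
  also have "\<dots> = (if b = b' then of_nat m else 0)"
  proof (cases "b = b'")
    case True
    then show ?thesis by (simp add: w_def d_def)
  next
    case False
    have "w \<noteq> 1"
    proof
      assume "w = 1"
      then obtain z :: int where "2 * pi * d / real m = of_int z * (2 * pi)"
        unfolding w_def cis_eq_1_iff by blast
      then have dz: "d = of_int z * real m" using m by (simp add: field_simps)
      have "\<bar>d\<bar> < real m" using assms(2,3) by (simp add: d_def)
      then have "\<bar>z\<bar> < 1"
        using dz m by (simp add: abs_mult)
      then show False using dz False by (simp add: d_def)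
    qed
    moreover have "w ^ m = 1"
      using m by (simp add: w_def DeMoivre d_def cis_multiple_2pi)
    ultimately show ?thesis
      using False geometric_sum[of w m] by simp
  qed
  finally show ?thesis .
qed

section \<open>The chain of levels \<open>E\<^sub>1, \<dots>, E\<^sub>N\<close>\<close>

locale level_chain =
  fixes N :: nat and n :: "nat \<Rightarrow> nat"
  assumes two_le_N: "2 \<le> N"
    and n_antimono: "\<And>k. 1 \<le> k \<Longrightarrow> k < N \<Longrightarrow> n (Suc k) \<le> n k"
    and n_N_pos: "1 \<le> n N"
begin

abbreviation "I \<equiv> labels N n"
abbreviation "Z \<equiv> Ztot N n"
abbreviation "Zs \<equiv> adj (Ztot N n)"
abbreviation "iter A m x \<equiv> opapp I (oppow I A m) x"

lemma n_pos:
  assumes "1 \<le> k" "k \<le> N"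
  shows "0 < n k"
proof -
  have "n N \<le> n k"
    using assms(2,1) by (induction rule: inc_induct) (auto intro: order_trans[OF _ n_antimono])
  then show ?thesis using n_N_pos by simp
qed

lemma finite_labels: "finite I"
proof -
  have "{Ket k a | k a. 1 \<le> k \<and> k \<le> N \<and> a < n k} \<subseteq> (\<Union>k\<in>{1..N}. Ket k ` {..<n k})"
    by auto
  then have "finite {Ket k a | k a. 1 \<le> k \<and> k \<le> N \<and> a < n k}"
    by (rule finite_subset) auto
  then show ?thesis
    unfolding labels_def by simp
qed

lemma in_labels [simp]:
  "KPlus \<in> I" "KMinus \<in> I" "Ket k a \<in> I \<longleftrightarrow> 1 \<le> k \<and> k \<le> N \<and> a < n k"
  unfolding labels_def by auto

lemma Ztot_Ket: "Z (Ket k1 b) (Ket k2 a) =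
   (if k1 = Suc k2 \<and> 1 \<le> k2 \<and> k2 \<le> N - 1 \<and> b < n k1 \<and> a < n k2
    then zeta n k2 ^ (b * a) / complex_of_real (sqrt (real (n k2))) else 0)"
proof -
  have "Z (Ket k1 b) (Ket k2 a) = (\<Sum>k\<in>{1..N-1}. if k = k2 then (if k1 = Suc k2 \<and> b < n k1 \<and> a < n k2
    then zeta n k2 ^ (b * a) / complex_of_real (sqrt (real (n k2))) else 0) else 0)"
    unfolding Ztot_def sum_fun_apply2 by (rule sum.cong) (auto simp: Zop_def)
  then show ?thesis
    by (simp add: sum.delta) (auto simp: not_less)
qed

lemma Zop_KPM [simp]:
  "Zop n k KPlus l = 0" "Zop n k KMinus l = 0" "Zop n k i KPlus = 0" "Zop n k i KMinus = 0"
  unfolding Zop_def by (auto split: lab.split)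

lemma Ztot_KPM [simp]: "Z KPlus l = 0" "Z KMinus l = 0" "Z i KPlus = 0" "Z i KMinus = 0"
  unfolding Ztot_def sum_fun_apply2 by simp_all

lemma iter_Suc: "iter A (Suc m) x = opapp I A (iter A m x)"
  by (simp add: opapp_opmult)

lemma iter_1: "x \<in> vecs I \<Longrightarrow> iter A 1 x = opapp I A x"
  using iter_Suc[of A 0 x] by (simp add: opapp_identity[OF finite_labels])

definition at_level :: "nat \<Rightarrow> qvec \<Rightarrow> bool" where
  "at_level j x \<longleftrightarrow> (\<forall>i. x i \<noteq> 0 \<longrightarrow> (\<exists>b<n j. i = Ket j b))"

lemma at_level_outside: "at_level j x \<Longrightarrow> (\<And>b. b < n j \<Longrightarrow> i \<noteq> Ket j b) \<Longrightarrow> x i = 0"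
  unfolding at_level_def by blast

lemma at_level_vecs: "at_level j x \<Longrightarrow> 1 \<le> j \<Longrightarrow> j \<le> N \<Longrightarrow> x \<in> vecs I"
  unfolding at_level_def vecs_def by auto

lemma at_level_scale: "at_level j x \<Longrightarrow> at_level j (\<lambda>i. c * x i)"
  unfolding at_level_def by auto

lemma at_level_phi: "at_level j (phi n j a)"
  unfolding at_level_def phi_def by (auto split: lab.splits if_splits)

lemma at_level_ket: "b < n j \<Longrightarrow> at_level j (ket (Ket j b))"
  unfolding at_level_def ket_def by auto

lemma phi_vecs: "1 \<le> j \<Longrightarrow> j \<le> N \<Longrightarrow> phi n j a \<in> vecs I"
  using at_level_vecs at_level_phi by blast

lemma sum_labels_at_level:
  assumes "1 \<le> j" "j \<le> N" and "\<And>l. (\<And>a. a < n j \<Longrightarrow> l \<noteq> Ket j a) \<Longrightarrow> f l = 0"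
  shows "(\<Sum>l\<in>I. f l) = (\<Sum>a<n j. f (Ket j a))"
proof -
  have "(\<Sum>l\<in>I. f l) = (\<Sum>l\<in>Ket j ` {..<n j}. f l)"
    using assms by (intro sum.mono_neutral_right[OF finite_labels]) auto
  also have "\<dots> = (\<Sum>a<n j. f (Ket j a))"
    by (subst sum.reindex) (auto simp: inj_on_def)
  finally show ?thesis .
qed

lemma at_level_Zs:
  assumes "at_level (Suc j) x"
  shows "at_level j (opapp I Zs x)"
  unfolding at_level_def
proof (intro allI impI)
  fix i assume "opapp I Zs x i \<noteq> 0"
  then obtain l where l: "Zs i l * x l \<noteq> 0"
    unfolding opapp_def by (meson sum.neutral)
  with assms obtain a where "l = Ket (Suc j) a"
    unfolding at_level_def by force
  with l show "\<exists>b<n j. i = Ket j b"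
    by (cases i) (auto simp: Ztot_Ket adj_def split: if_splits)
qed

lemma at_level_iter_Zs:
  "at_level j x \<Longrightarrow> 1 \<le> j \<Longrightarrow> j \<le> N \<Longrightarrow> s \<le> j \<Longrightarrow> at_level (j - s) (iter Zs s x)"
proof (induction s)
  case 0
  then show ?case using opapp_identity[OF finite_labels] at_level_vecs by simp
next
  case (Suc s)
  then have "at_level (Suc (j - Suc s)) (iter Zs s x)" using Suc_diff_Suc by simp
  then show ?case unfolding iter_Suc by (rule at_level_Zs)
qed

lemma Zop_at_level:
  assumes x: "at_level j x" and k: "1 \<le> k" "k \<le> N - 1"
  shows "opapp I (Zop n k) x = (if k = j then opapp I Z x else 0)"
proof -
  have "Zop n k i l * x l = (if k = j then Z i l * x l else 0)" for i l
  proof (cases "x l = 0")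
    case False
    with x obtain a where "l = Ket j a" unfolding at_level_def by force
    with k show ?thesis by (cases i) (auto simp: Zop_def Ztot_Ket)
  qed simp
  then show ?thesis unfolding opapp_def by (auto intro!: ext)
qed

lemma adj_Zop_at_level:
  assumes x: "at_level j x" and k: "1 \<le> k" "k \<le> N - 1"
  shows "opapp I (adj (Zop n k)) x = (if j = Suc k then opapp I Zs x else 0)"
proof -
  have "adj (Zop n k) i l * x l = (if j = Suc k then Zs i l * x l else 0)" for i l
  proof (cases "x l = 0")
    case False
    with x obtain a where "l = Ket j a" unfolding at_level_def by force
    with k show ?thesis by (cases i) (auto simp: Zop_def Ztot_Ket adj_def)
  qed simp
  then show ?thesis unfolding opapp_def by (auto intro!: ext)
qed

lemma Pk_at_level:
  assumes x: "at_level j x" and j: "1 \<le> j" "j \<le> N"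
  shows "opapp I (Pk n j') x = (if j' = j then x else 0)"
proof (rule ext)
  fix i
  have "Pk n j' i l * x l = (if l = i then (if \<exists>a<n j'. i = Ket j' a then x i else 0) else 0)" for l
    unfolding Pk_def by auto
  then have "opapp I (Pk n j') x i = (if i \<in> I \<and> (\<exists>a<n j'. i = Ket j' a) then x i else 0)"
    unfolding opapp_def using finite_labels by (simp add: sum.delta') blast
  also have "\<dots> = (if j' = j then x else 0) i"
    using x j unfolding at_level_def by (cases "x i = 0") force+
  finally show "opapp I (Pk n j') x i = (if j' = j then x else 0) i" .
qed

lemma KPM_annihilated:
  "opapp I (Zop n k) (ket KPlus) = 0" "opapp I (Zop n k) (ket KMinus) = 0"
  "opapp I (adj (Zop n k)) (ket KPlus) = 0" "opapp I (adj (Zop n k)) (ket KMinus) = 0"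
  "opapp I (Pk n j) (ket KPlus) = 0" "opapp I (Pk n j) (ket KMinus) = 0"
  by (auto simp: opapp_ket[OF finite_labels] adj_def Pk_def)

lemma Zs_ket_0:
  assumes "1 \<le> k" "k \<le> N - 1"
  shows "opapp I Zs (ket (Ket (Suc k) 0)) = phi n k 0"
proof -
  have "Ket (Suc k) 0 \<in> I" using assms n_pos[of "Suc k"] by simp
  then show ?thesis
    using assms n_pos[of "Suc k"]
    by (simp add: opapp_ket[OF finite_labels])
      (auto simp: fun_eq_iff adj_def Ztot_Ket phi_def split: lab.split)
qed

lemma Z_ket_0:
  assumes "1 \<le> k" "k \<le> N - 1"
  shows "opapp I Z (ket (Ket k 0)) =
    (\<lambda>i. complex_of_real (sqrt (real (n (Suc k))) / sqrt (real (n k))) * phi n (Suc k) 0 i)"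
proof -
  have "Ket k 0 \<in> I" using assms n_pos[of k] by simp
  then show ?thesis
    using assms n_pos[of k] n_pos[of "Suc k"]
    by (simp add: opapp_ket[OF finite_labels])
      (auto simp: fun_eq_iff Ztot_Ket phi_def split: lab.split)
qed

text \<open>Since \<open>n\<^sub>k\<^sub>+\<^sub>1 \<le> n\<^sub>k\<close>, the rows of \<open>Z\<^sub>k\<close> are orthonormal, i.e. \<open>Z Z\<^sup>*\<close> is the
  identity on \<open>E\<^sub>2 \<oplus> \<dots> \<oplus> E\<^sub>N\<close>.\<close>

lemma Z_Zs_entry:
  assumes j: "2 \<le> j" "j \<le> N" and b': "b' < n j"
  shows "opmult I Z Zs i (Ket j b') = (if i = Ket j b' then 1 else 0)"
proof -
  define k where "k = j - 1"
  have jk: "j = Suc k" and k: "1 \<le> k" "k \<le> N - 1" using j by (auto simp: k_def)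
  have nk: "0 < n k" "n j \<le> n k" using n_pos[of k] n_antimono[of k] k jk by auto
  have "opmult I Z Zs i (Ket j b') = (\<Sum>a<n k. Z i (Ket k a) * cnj (Z (Ket j b') (Ket k a)))"
    unfolding opmult_def adj_def
  proof (rule sum_labels_at_level)
    fix l assume "\<And>a. a < n k \<Longrightarrow> l \<noteq> Ket k a"
    then show "Z i l * cnj (Z (Ket j b') l) = 0" using jk by (cases l) (auto simp: Ztot_Ket)
  qed (use k in auto)
  also have "\<dots> = (if i = Ket j b' then 1 else 0)"
  proof (cases "\<exists>b<n j. i = Ket j b")
    case True
    then obtain b where b: "b < n j" "i = Ket j b" by blast
    let ?s = "complex_of_real (sqrt (real (n k)))"
    have "(\<Sum>a<n k. Z i (Ket k a) * cnj (Z (Ket j b') (Ket k a)))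
        = (\<Sum>a<n k. zeta n k ^ (b * a) * cnj (zeta n k ^ (b' * a))) / (?s * ?s)"
      unfolding sum_divide_distrib using b b' k jk by (intro sum.cong) (auto simp: Ztot_Ket)
    also have "\<dots> = (if b = b' then 1 else 0)"
      using sum_cis_power_orthogonal[of b "n k" b'] b b' nk
      by (simp add: zeta_def flip: of_real_mult)
    finally show ?thesis using b by simp
  next
    case False
    then have "Z i (Ket k a) = 0" for a using jk by (cases i) (auto simp: Ztot_Ket)
    then show ?thesis using False b' by auto
  qed
  finally show ?thesis .
qed

lemma Z_Zs_at_level:
  assumes x: "at_level j x" and j: "2 \<le> j" "j \<le> N"
  shows "opapp I Z (opapp I Zs x) = x"
proof (rule ext)
  fix i
  have "opapp I Z (opapp I Zs x) i = (\<Sum>b'<n j. opmult I Z Zs i (Ket j b') * x (Ket j b'))"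
    unfolding opapp_opmult[symmetric] opapp_def[of I "opmult I Z Zs"]
    by (rule sum_labels_at_level) (use j at_level_outside[OF x] in auto)
  also have "\<dots> = (\<Sum>b'<n j. if i = Ket j b' then x i else 0)"
    using j by (intro sum.cong) (auto simp: Z_Zs_entry)
  also have "\<dots> = x i"
    using at_level_outside[OF x, of i] by (cases "\<exists>b<n j. i = Ket j b") (auto simp: sum.delta)
  finally show "opapp I Z (opapp I Zs x) i = x i" .
qed

lemma Z_phi_0:
  assumes "1 \<le> k" "k \<le> N - 1"
  shows "opapp I Z (phi n k 0) = ket (Ket (Suc k) 0)"
proof -
  have "opapp I Z (phi n k 0) = opapp I Z (opapp I Zs (ket (Ket (Suc k) 0)))"
    using Zs_ket_0[OF assms] by simp
  also have "\<dots> = ket (Ket (Suc k) 0)"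
    using assms n_pos[of "Suc k"] by (intro Z_Zs_at_level[of "Suc k"] at_level_ket) auto
  finally show ?thesis .
qed

section \<open>The generators of \<open>V\<^sup>\<bottom>\<close> under the ladder operators\<close>

lemma gens_iff: "g \<in> gens N n \<longleftrightarrow> g = ket KMinus \<or> g = ket KPlus
   \<or> (\<exists>m. m \<le> N - 1 \<and> g = iter Z m (phi n 1 0))
   \<or> (\<exists>m. m \<le> N - 1 \<and> g = iter Zs m (phi n N 0))
   \<or> (\<exists>m s. 1 \<le> m \<and> 2 * m \<le> N - 1 \<and> 1 \<le> s \<and> s \<le> 2 * m \<and> g = iter Zs s (phi n (2 * m + 1) 0))"
  unfolding gens_def Let_def by blast

lemma gens_intros:
  "ket KMinus \<in> gens N n" "ket KPlus \<in> gens N n"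
  "m \<le> N - 1 \<Longrightarrow> iter Z m (phi n 1 0) \<in> gens N n"
  "m \<le> N - 1 \<Longrightarrow> iter Zs m (phi n N 0) \<in> gens N n"
  "1 \<le> m \<Longrightarrow> 2 * m \<le> N - 1 \<Longrightarrow> 1 \<le> s \<Longrightarrow> s \<le> 2 * m \<Longrightarrow>
    iter Zs s (phi n (2 * m + 1) 0) \<in> gens N n"
  unfolding gens_iff by blast+

definition perp_V :: "qvec \<Rightarrow> bool" where
  "perp_V x \<longleftrightarrow> (\<forall>v\<in>Vsp N n. inner I x v = 0)"

lemma perp_V_gens: "g \<in> gens N n \<Longrightarrow> perp_V g"
  unfolding perp_V_def Vsp_def orthc_def by blast

lemma perp_V_scale: "perp_V x \<Longrightarrow> perp_V (\<lambda>i. c * x i)"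
  unfolding perp_V_def by (simp add: inner_scale_left)

lemma perp_V_zero: "perp_V 0"
  unfolding perp_V_def inner_def by simp

lemma iter_Z_phi_1:
  "m \<le> N - 1 \<Longrightarrow> \<exists>\<alpha>::real. \<alpha> > 0 \<and> iter Z m (phi n 1 0) =
    (\<lambda>i. complex_of_real \<alpha> * (if even m then phi n (Suc m) 0 i else ket (Ket (Suc m) 0) i))"
proof (induction m)
  case 0
  then show ?case
    using two_le_N by (intro exI[of _ 1]) (simp add: opapp_identity[OF finite_labels] phi_vecs)
next
  case (Suc m)
  then obtain \<alpha> :: real where \<alpha>: "\<alpha> > 0" and eq: "iter Z m (phi n 1 0) =
    (\<lambda>i. complex_of_real \<alpha> * (if even m then phi n (Suc m) 0 i else ket (Ket (Suc m) 0) i))"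
    by auto
  have k: "1 \<le> Suc m" "Suc m \<le> N - 1" using Suc.prems by auto
  show ?case
  proof (cases "even m")
    case True
    then have "iter Z (Suc m) (phi n 1 0) = (\<lambda>i. complex_of_real \<alpha> * ket (Ket (Suc (Suc m)) 0) i)"
      unfolding iter_Suc eq by (simp add: opapp_scale Z_phi_0[OF k])
    then show ?thesis using True \<alpha> by (intro exI[of _ \<alpha>]) simp
  next
    case False
    define c where "c = sqrt (real (n (Suc (Suc m)))) / sqrt (real (n (Suc m)))"
    have c: "c > 0" unfolding c_def using n_pos[of "Suc m"] n_pos[of "Suc (Suc m)"] k by auto
    have "iter Z (Suc m) (phi n 1 0) = (\<lambda>i. complex_of_real (\<alpha> * c) * phi n (Suc (Suc m)) 0 i)"
      unfolding iter_Suc eq using False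
      by (simp add: opapp_scale Z_ket_0[OF k] c_def times_divide_eq_right mult.assoc)
    then show ?thesis using False \<alpha> c by (intro exI[of _ "\<alpha> * c"]) simp
  qed
qed

lemma perp_V_phi_odd:
  assumes "2 * m \<le> N - 1"
  shows "perp_V (phi n (Suc (2 * m)) 0)"
proof -
  obtain \<alpha> :: real where \<alpha>: "\<alpha> > 0"
    and eq: "iter Z (2 * m) (phi n 1 0) = (\<lambda>i. complex_of_real \<alpha> * phi n (Suc (2 * m)) 0 i)"
    using iter_Z_phi_1[OF assms] by auto
  have "perp_V (iter Z (2 * m) (phi n 1 0))"
    using assms by (intro perp_V_gens gens_intros) auto
  then have "perp_V (\<lambda>i. complex_of_real (1 / \<alpha>) * iter Z (2 * m) (phi n 1 0) i)"
    by (rule perp_V_scale)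
  then show ?thesis unfolding eq using \<alpha> by simp
qed

definition shifts_into_perp_V :: "nat \<Rightarrow> qvec \<Rightarrow> bool" where
  "shifts_into_perp_V j g \<longleftrightarrow> at_level j g \<and>
     (j < N \<longrightarrow> perp_V (opapp I Z g)) \<and> (2 \<le> j \<longrightarrow> perp_V (opapp I Zs g))"

lemma shifts_into_perp_V_forward:
  assumes m: "m \<le> N - 1"
  shows "shifts_into_perp_V (Suc m) (iter Z m (phi n 1 0))"
proof -
  let ?g = "iter Z m (phi n 1 0)"
  obtain \<alpha> :: real where eq: "?g =
      (\<lambda>i. complex_of_real \<alpha> * (if even m then phi n (Suc m) 0 i else ket (Ket (Suc m) 0) i))"
    using iter_Z_phi_1[OF m] by blast
  have "at_level (Suc m) ?g"
    unfolding eq using m two_le_N n_pos[of "Suc m"]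
    by (intro at_level_scale) (cases "even m", auto simp: at_level_phi at_level_ket)
  moreover have "perp_V (opapp I Z ?g)" if "Suc m < N"
    using that unfolding iter_Suc[symmetric] by (intro perp_V_gens gens_intros) auto
  moreover have "perp_V (opapp I Zs ?g)" if "2 \<le> Suc m"
  proof (cases "even m")
    case True
    then obtain m' where m': "m = 2 * m'" by blast
    have "opapp I Zs ?g = (\<lambda>i. complex_of_real \<alpha> * opapp I Zs (phi n (2 * m' + 1) 0) i)"
      unfolding eq using True m' by (simp add: opapp_scale)
    also have "opapp I Zs (phi n (2 * m' + 1) 0) = iter Zs 1 (phi n (2 * m' + 1) 0)"
      using m m' two_le_N by (intro iter_1[symmetric] phi_vecs) auto
    finally have "opapp I Zs ?g = (\<lambda>i. complex_of_real \<alpha> * iter Zs 1 (phi n (2 * m' + 1) 0) i)" .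
    moreover have "perp_V (iter Zs 1 (phi n (2 * m' + 1) 0))"
      using m m' that by (intro perp_V_gens gens_intros) auto
    ultimately show ?thesis by (metis perp_V_scale)
  next
    case False
    then obtain m' where m': "m = Suc (2 * m')" by (metis oddE Suc_eq_plus1)
    have "opapp I Zs ?g = (\<lambda>i. complex_of_real \<alpha> * phi n m 0 i)"
      unfolding eq using False m that by (simp add: opapp_scale Zs_ket_0)
    then show ?thesis using m m' by (simp add: perp_V_scale perp_V_phi_odd)
  qed
  ultimately show ?thesis unfolding shifts_into_perp_V_def by blast
qed

lemma shifts_into_perp_V_backward:
  assumes J: "1 \<le> J" "J \<le> N"
    and chain: "\<And>s. s \<le> J - 1 \<Longrightarrow> perp_V (iter Zs s (phi n J 0))"
    and s: "s \<le> J - 1" "0 < s \<or> J = N"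
  shows "shifts_into_perp_V (J - s) (iter Zs s (phi n J 0))"
proof -
  let ?g = "iter Zs s (phi n J 0)"
  have "perp_V (opapp I Z ?g)" if lt: "J - s < N"
  proof -
    obtain s' where s': "s = Suc s'" using s lt by (cases s) auto
    have "at_level (J - s') (iter Zs s' (phi n J 0))"
      using J s s' by (intro at_level_iter_Zs at_level_phi) auto
    then have "opapp I Z ?g = iter Zs s' (phi n J 0)"
      unfolding s' iter_Suc using J s s' by (intro Z_Zs_at_level[of "J - s'"]) auto
    then show ?thesis using chain s s' by simp
  qed
  moreover have "perp_V (opapp I Zs ?g)" if "2 \<le> J - s"
    unfolding iter_Suc[symmetric] using that by (intro chain) auto
  ultimately show ?thesis
    unfolding shifts_into_perp_V_def using J s by (auto intro: at_level_iter_Zs at_level_phi)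
qed

lemma gens_cases:
  assumes "g \<in> gens N n"
  obtains "g = ket KMinus" | "g = ket KPlus" | j where "1 \<le> j" "j \<le> N" "shifts_into_perp_V j g"
proof -
  have back_N: "perp_V (iter Zs s (phi n N 0))" if "s \<le> N - 1" for s
    using that by (intro perp_V_gens gens_intros)
  have back_odd: "perp_V (iter Zs s (phi n (2 * m + 1) 0))"
    if "1 \<le> m" "2 * m \<le> N - 1" "s \<le> 2 * m" for m s
  proof (cases "s = 0")
    case True
    then show ?thesis
      using that two_le_N by (simp add: opapp_identity[OF finite_labels] phi_vecs perp_V_phi_odd)
  next
    case False
    with that show ?thesis by (intro perp_V_gens gens_intros) auto
  qed
  from assms consider "g = ket KMinus" | "g = ket KPlus"
    | m where "m \<le> N - 1" "g = iter Z m (phi n 1 0)"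
    | m where "m \<le> N - 1" "g = iter Zs m (phi n N 0)"
    | m s where "1 \<le> m" "2 * m \<le> N - 1" "1 \<le> s" "s \<le> 2 * m" "g = iter Zs s (phi n (2 * m + 1) 0)"
    unfolding gens_iff by blast
  then show ?thesis
  proof cases
    case (3 m)
    then show ?thesis using that(3)[of "Suc m"] shifts_into_perp_V_forward two_le_N by auto
  next
    case (4 m)
    then show ?thesis
      using that(3)[of "N - m"] shifts_into_perp_V_backward[OF _ _ back_N, of m] two_le_N by auto
  next
    case (5 m s)
    then show ?thesis
      using that(3)[of "2 * m + 1 - s"] shifts_into_perp_V_backward[OF _ _ back_odd, of m s] by auto
  qed (use that in auto)
qed

lemma perp_V_Zop_gens:
  assumes g: "g \<in> gens N n" and k: "1 \<le> k" "k \<le> N - 1"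
  shows "perp_V (opapp I (Zop n k) g) \<and> perp_V (opapp I (adj (Zop n k)) g)"
  using g
proof (cases rule: gens_cases)
  case (3 j)
  then have "at_level j g" "j < N \<longrightarrow> perp_V (opapp I Z g)" "2 \<le> j \<longrightarrow> perp_V (opapp I Zs g)"
    unfolding shifts_into_perp_V_def by auto
  with k show ?thesis
    by (auto simp: Zop_at_level adj_Zop_at_level perp_V_zero)
qed (auto simp: KPM_annihilated perp_V_zero)

lemma perp_V_Pk_gens:
  assumes g: "g \<in> gens N n"
  shows "perp_V (opapp I (Pk n j') g)"
  using g
proof (cases rule: gens_cases)
  case (3 j)
  then show ?thesis
    using perp_V_gens[OF g] by (auto simp: shifts_into_perp_V_def Pk_at_level perp_V_zero)
qed (auto simp: KPM_annihilated perp_V_zero)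

section \<open>Operators reduced by \<open>V\<close>\<close>

definition maps_gens_into_perp_V :: "qop \<Rightarrow> bool" where
  "maps_gens_into_perp_V B \<longleftrightarrow> on_space I B \<and>
     (\<forall>g\<in>gens N n. perp_V (opapp I B g) \<and> perp_V (opapp I (adj B) g))"

lemma maps_gens_into_perp_V_adj: "maps_gens_into_perp_V B \<Longrightarrow> maps_gens_into_perp_V (adj B)"
  unfolding maps_gens_into_perp_V_def by (simp add: on_space_adj)

lemma maps_gens_into_perp_V_Zop:
  assumes "1 \<le> k" "k \<le> N - 1"
  shows "maps_gens_into_perp_V (Zop n k)"
proof -
  have "on_space I (Zop n k)"
    using assms unfolding on_space_def by (auto simp: Zop_def split: lab.splits)
  then show ?thesis
    unfolding maps_gens_into_perp_V_def using perp_V_Zop_gens assms by blast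
qed

lemma maps_gens_into_perp_V_Pk:
  assumes "1 \<le> j" "j \<le> N"
  shows "maps_gens_into_perp_V (Pk n j)"
proof -
  have "adj (Pk n j) = Pk n j"
    unfolding adj_def Pk_def by (intro ext) auto
  moreover have "on_space I (Pk n j)"
    using assms unfolding on_space_def Pk_def by auto
  ultimately show ?thesis
    unfolding maps_gens_into_perp_V_def using perp_V_Pk_gens by simp
qed

lemma maps_gens_into_perp_V_outer:
  assumes "x \<in> gens N n" "y \<in> gens N n" "x \<in> vecs I" "y \<in> vecs I"
  shows "maps_gens_into_perp_V (outer x y)"
  unfolding maps_gens_into_perp_V_def on_space_def adj_outer opapp_outer
  using assms by (auto intro!: perp_V_scale[OF perp_V_gens] simp: outer_def vecs_def)

lemma reducing_V: "maps_gens_into_perp_V B \<Longrightarrow> reducing I (Vsp N n) B"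
  unfolding maps_gens_into_perp_V_def Vsp_def
  by (intro reducing_orthc) (auto simp: perp_V_def Vsp_def)

lemma commutes_orth_proj_V:
  assumes X: "X = Vsp N n \<or> X = orthc I (Vsp N n)" and p: "orth_proj I X p"
    and B: "maps_gens_into_perp_V B"
  shows "commutes I p B"
proof -
  have on: "on_space I B" using B unfolding maps_gens_into_perp_V_def by blast
  have "reducing I X B"
    using X reducing_V[OF B] reducing_orthc_orthc[OF on] by auto
  moreover have "x - y \<in> X" if "x \<in> X" "y \<in> X" for x y
    using X that unfolding Vsp_def by (auto intro: orthc_diff)
  ultimately show ?thesis
    unfolding commutes_def using orth_proj_commute[OF finite_labels p _ on] by blast
qed

lemma in_gens_and_vecs:
  "ket KPlus \<in> gens N n" "ket KMinus \<in> gens N n" "phi n 1 0 \<in> gens N n" "phi n N 0 \<in> gens N n"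
  "ket KPlus \<in> vecs I" "ket KMinus \<in> vecs I" "phi n 1 0 \<in> vecs I" "phi n N 0 \<in> vecs I"
  using gens_intros(1,2) gens_intros(3,4)[of 0] two_le_N
  by (auto simp: ket_in_vecs phi_vecs opapp_identity[OF finite_labels])

context
  fixes p :: qop
  assumes selfadjoint: "\<forall>i\<in>I. \<forall>j\<in>I. adj p i j = p i j"
    and commutes_with_reduced: "\<And>B. maps_gens_into_perp_V B \<Longrightarrow> commutes I p B"
begin

lemma commutes_outer:
  "x \<in> gens N n \<Longrightarrow> y \<in> gens N n \<Longrightarrow> x \<in> vecs I \<Longrightarrow> y \<in> vecs I \<Longrightarrow> commutes I p (outer x y)"
  by (intro commutes_with_reduced maps_gens_into_perp_V_outer)

lemma commutes_Heff: "commutes I p (Heff N n gm gp)"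
proof -
  have ladder: "commutes I p (Zop n k)" "commutes I p (Pk n (Suc k))" if "k \<in> {1..N-1}" for k
    using that
    by (auto intro!: commutes_with_reduced maps_gens_into_perp_V_Zop maps_gens_into_perp_V_Pk)
  show ?thesis
    unfolding Heff_def absZ_def
    by (intro commutes_add commutes_diff commutes_scl commutes_sum commutes_mult
        commutes_adj[OF selfadjoint] ladder commutes_outer in_gens_and_vecs)
qed

lemma commutes_kraus:
  assumes "w \<in> freqs N"
  shows "commutes I p (kraus N n Gm Gp e w)"
proof (cases w)
  case (WLev k)
  then have "1 \<le> k" "k \<le> N - 1" using assms unfolding freqs_def by auto
  then have "commutes I p (Zop n k)" "commutes I p (adj (Zop n k))"
    by (auto intro!: commutes_with_reduced maps_gens_into_perp_V_adj
        maps_gens_into_perp_V_Zop)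
  then show ?thesis using WLev
    by (cases e) (auto simp: kraus_def intro!: commutes_scl)
next
  case WPlus
  then show ?thesis
    by (cases e) (auto simp: kraus_def in_gens_and_vecs[unfolded One_nat_def]
        intro!: commutes_scl commutes_outer)
next
  case WMinus
  then show ?thesis
    by (cases e) (auto simp: kraus_def in_gens_and_vecs[unfolded One_nat_def] commutes_zero
        intro!: commutes_scl commutes_outer)
qed

lemma harmonic_if_commutes: "harmonic N n Gm Gp gm gp p"
  unfolding harmonic_def
  using selfadjoint Lstar_eq_0[OF selfadjoint commutes_Heff commutes_kraus] by blast

end

end

theorem theorem3p3:
  fixes N :: nat and n :: "nat \<Rightarrow> nat"
    and Gm Gp gm gp :: "freq \<Rightarrow> real"
    and p q :: qop
  assumes "N \<ge> 2"
    and "\<forall>k. 1 \<le> k \<and> k < N \<longrightarrow> n (Suc k) \<le> n k"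
    and "n N \<ge> 1"
    and "\<forall>w\<in>freqs N. Gm w > 0 \<and> Gp w > 0"
    and "orth_proj (labels N n) (orthc (labels N n) (Vsp N n)) p"
    and "orth_proj (labels N n) (Vsp N n) q"
  shows "harmonic N n Gm Gp gm gp p \<and> harmonic N n Gm Gp gm gp q"
proof -
  interpret level_chain N n
    using assms(1-3) by unfold_locales auto
  have "harmonic N n Gm Gp gm gp r"
    if "X = Vsp N n \<or> X = orthc I (Vsp N n)" "orth_proj I X r" for X r
    using that orth_proj_selfadjoint[OF finite_labels that(2)] commutes_orth_proj_V
    by (intro harmonic_if_commutes) auto
  then show ?thesis
    using assms(5,6) by blast
qed

end
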